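(* Let $$C= \begin{pmatrix} -1& 2& 2\\ -2&1& 2\\ -2&2& 3 \end{pmatrix}.$$ For every positive integer $n$, writing $C^n(3,4,5)^\top=(x,y,z)^\top$, the inradius of the triangle with side lengths $x,y,z$ is $2n+1$.
   Context: Triples are regarded as row vectors and $\top$ denotes transpose. The triple $C^n(3,4,5)^\top$ is a primitive Pythagorean triple (positive integers $x,y,z$ with $x^2+y^2=z^2$), so the triangle is a right triangle with hypotenuse $z$. *)

theory Defs
  imports "HOL-Analysis.Analysis"
begin

definition vec3 :: "real \<Rightarrow> real \<Rightarrow> real \<Rightarrow> real ^ 3" where
  "vec3 a b c = (\<chi> i. if i = 1 then a else if i = 2 then b else c)"

definition Cmat :: "real ^ 3 ^ 3" where
  "Cmat = (\<chi> i. if i = 1 then vec3 (-1) 2 2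
                 else if i = 2 then vec3 (-2) 1 2
                 else vec3 (-2) 2 3)"

fun matpow :: "real ^ 'n ^ 'n \<Rightarrow> nat \<Rightarrow> real ^ 'n ^ 'n" where
  "matpow A 0 = mat 1"
| "matpow A (Suc n) = A ** matpow A n"

text \<open>Inradius of a triangle with side lengths a, b, c: area (Heron) divided by semiperimeter.\<close>
definition inradius :: "real \<Rightarrow> real \<Rightarrow> real \<Rightarrow> real" where
  "inradius a b c =
     (let s = (a + b + c) / 2 in sqrt (s * (s - a) * (s - b) * (s - c)) / s)"

end

theory Submission
  imports Defs
begin

text \<open>
  The inradius of a right triangle with legs \<open>a\<close>, \<open>b\<close> and hypotenuse \<open>c\<close> is \<open>(a + b - c) / 2\<close>.
  Induction on \<open>n\<close> gives the closed form
  \<open>C\<^sup>n (3, 4, 5) = ((2n+1)(2n+3), 4(n+1), (2n+1)(2n+3) + 2)\<close>, a right triangle in which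
  the legs together exceed the hypotenuse by \<open>4n + 2\<close>.
\<close>

lemma inradius_right_triangle:
  fixes a b c :: real
  assumes "a > 0" "b > 0" "c \<ge> 0" "a\<^sup>2 + b\<^sup>2 = c\<^sup>2"
  shows "inradius a b c = (a + b - c) / 2"
proof -
  define s where "s = (a + b + c) / 2"
  have s_pos: "s > 0"
    using assms by (simp add: s_def)
  have "s * (s - a) * (s - b) * (s - c) = ((a + b)\<^sup>2 - c\<^sup>2) * (c\<^sup>2 - (a - b)\<^sup>2) / 16"
    unfolding s_def by (simp add: field_simps power2_eq_square)
  also have "\<dots> = (a * b / 2)\<^sup>2"
    by (simp add: flip: assms(4)) (simp add: power2_eq_square algebra_simps)
  finally have heron: "s * (s - a) * (s - b) * (s - c) = (a * b / 2)\<^sup>2" .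
  have "sqrt ((a * b / 2)\<^sup>2) = a * b / 2"
    using assms by simp
  moreover have "a * b / 2 = s * ((a + b - c) / 2)"
  proof -
    have "s * ((a + b - c) / 2) = ((a + b)\<^sup>2 - c\<^sup>2) / 4"
      unfolding s_def by (simp add: field_simps power2_eq_square)
    then show ?thesis
      by (simp add: flip: assms(4)) (simp add: power2_eq_square algebra_simps)
  qed
  ultimately show ?thesis
    using s_pos by (simp add: inradius_def Let_def heron flip: s_def)
qed

lemma vec3_nth [simp]: "vec3 a b c $ 1 = a" "vec3 a b c $ 2 = b" "vec3 a b c $ 3 = c"
  by (simp_all add: vec3_def)

lemma Cmat_mult_vec3:
  "Cmat *v vec3 a b c = vec3 (- a + 2 * b + 2 * c) (- 2 * a + b + 2 * c) (- 2 * a + 2 * b + 3 * c)"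
  unfolding vec_eq_iff
proof
  fix i :: 3
  show "(Cmat *v vec3 a b c) $ i = vec3 (- a + 2 * b + 2 * c) (- 2 * a + b + 2 * c) (- 2 * a + 2 * b + 3 * c) $ i"
    using exhaust_3[of i] by (auto simp: Cmat_def matrix_vector_mult_def sum_3 vec3_def)
qed

lemma matpow_Cmat_mult_345:
  "matpow Cmat n *v vec3 3 4 5 =
     vec3 ((2 * real n + 1) * (2 * real n + 3)) (4 * (real n + 1))
          ((2 * real n + 1) * (2 * real n + 3) + 2)"
proof (induction n)
  case 0
  then show ?case by (simp add: matrix_vector_mul_lid)
next
  case (Suc n)
  have "matpow Cmat (Suc n) *v vec3 3 4 5 = Cmat *v (matpow Cmat n *v vec3 3 4 5)"
    by (simp add: matrix_vector_mul_assoc)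
  then show ?case
    by (simp add: Suc.IH Cmat_mult_vec3 algebra_simps)
qed

theorem mainTheorem5:
  fixes n :: nat
  assumes "n \<ge> 1"
  shows "let v = matpow Cmat n *v vec3 3 4 5
         in inradius (v $ 1) (v $ 2) (v $ 3) = 2 * real n + 1"
proof -
  define m where "m = real n"
  have "m \<ge> 0"
    by (simp add: m_def)
  have pythagoras: "((2 * m + 1) * (2 * m + 3))\<^sup>2 + (4 * (m + 1))\<^sup>2 = ((2 * m + 1) * (2 * m + 3) + 2)\<^sup>2"
    by (simp add: power2_eq_square algebra_simps)
  have "inradius ((2 * m + 1) * (2 * m + 3)) (4 * (m + 1)) ((2 * m + 1) * (2 * m + 3) + 2) = 2 * m + 1"
    using \<open>m \<ge> 0\<close> by (subst inradius_right_triangle[OF _ _ _ pythagoras]) auto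
  then show ?thesis
    by (simp add: matpow_Cmat_mult_345 flip: m_def)
qed

end
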